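(* Let $0<p\leqslant q:=1-p$, let $\tilde A_k$ be as in the context and let $0<\varepsilon<\pi/2$. Then there exist $\varepsilon'\in(0,1)$ and absolute constants (independent of $k$ and $z$) such that, for $|z|\geqslant1$: (i) for $|\arg(z)|\leqslant\varepsilon$, $\tilde A_k(z)=O\left(|z|^{\varepsilon'}\right)$ uniformly in $z$ and $k\geqslant0$; (ii) for $\varepsilon\leqslant|\arg(z)|\leqslant\pi$, $e^z\tilde A_k(z)=O\left(e^{(1-\varepsilon')|z|}\right)$ uniformly in $z$ and $k\geqslant0$.
   Context: The random variables $X_n$ are defined by $X_0=0$ and $X_n \stackrel{d}{=} X_{I_n}+1$ for $n\geqslant 1$, where $(X_n)$ and $(I_n)$ are independent and $\mathbb{P}(I_n=k)=\binom{n}{k}\frac{p^kq^{n-k}-p^k(q-p)^{n-k}}{1-q^n}$ for $k=0,\dots,n-1$. For $k\geqslant0$, $\tilde A_k(z):=e^{-z}\sum_{n\geqslant0}\mathbb{P}(X_n=k)z^n/n!$ (entire functions). They satisfy $\tilde A_0(z)=e^{-z}$ and $\tilde{A}_{k+1}(z)=\left(1-e^{-pz}\right)\tilde{A}_k(pz)+e^{-pz}\tilde{A}_{k+1}(qz)$ for $k\geqslant0$. *)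

theory Defs
  imports "HOL-Analysis.Analysis"
begin

definition pI :: "real \<Rightarrow> nat \<Rightarrow> nat \<Rightarrow> real" where
  "pI p n k = real (n choose k) *
     (p ^ k * (1 - p) ^ (n - k) - p ^ k * ((1 - p) - p) ^ (n - k)) / (1 - (1 - p) ^ n)"

text \<open>pX p k n = P(X_n = k), from X_0 = 0 and X_n = X_{I_n} + 1 (n >= 1), I_n independent of (X_j).\<close>
fun pX :: "real \<Rightarrow> nat \<Rightarrow> nat \<Rightarrow> real" where
  "pX p 0 n = (if n = 0 then 1 else 0)"
| "pX p (Suc k) n = (if n = 0 then 0 else (\<Sum>j<n. pI p n j * pX p k j))"

definition At :: "real \<Rightarrow> nat \<Rightarrow> complex \<Rightarrow> complex" where
  "At p k z = exp (- z) * (\<Sum>n. complex_of_real (pX p k n) * z ^ n / of_nat (fact n))"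

end

theory Submission
  imports Defs
begin

text \<open>
  With At p k z = e^(-z) egf (pX p k) z, the recursion for X_n becomes, coefficientwise by the
  binomial theorem, the functional equation
  At (k+1) z = (1 - e^(-pz)) At k (pz) + e^(-pz) At (k+1) (qz).
  A bound g k z <= B h z then propagates by induction on k + floor |z|: both (k, pz) and
  (k+1, qz) are smaller once p|z| >= 1, a disc of fixed radius is handled by the crude bound
  e^|z|, and for large |z| the recursion has to map h into itself. In the sector
  Re z >= cos(eps) |z| the factor e^(-pz) is tiny and h = |z|^eps' works since p^eps' < 1; in the
  complementary sector e^z At k z obeys a recursion with weights e^(q Re z), which
  h = e^((1 - eps') |z|) absorbs for eps' = (1 - cos eps) / 2.
\<close>

lemma pI_nonneg:
  assumes "0 < p" "p \<le> 1 - p"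
  shows "0 \<le> pI p n j"
proof -
  have "(1 - p - p) ^ (n - j) \<le> (1 - p) ^ (n - j)"
    using assms by (intro power_mono) auto
  moreover have "(1 - p) ^ n \<le> 1"
    using assms by (intro power_le_one) auto
  ultimately show ?thesis
    unfolding pI_def using assms
    by (intro divide_nonneg_nonneg mult_nonneg_nonneg) (auto simp: right_diff_distrib[symmetric])
qed

lemma sum_pI_eq_1:
  assumes "0 < p" "p \<le> 1 - p" "n \<ge> 1"
  shows "(\<Sum>j<n. pI p n j) = 1"
proof -
  have "(\<Sum>j<n. real (n choose j) * p ^ j * (1 - p) ^ (n - j)) = 1 - p ^ n"
    using binomial_ring[of p "1 - p" n] by (simp add: lessThan_Suc_atMost[symmetric] mult.commute)
  moreover have "(\<Sum>j<n. real (n choose j) * p ^ j * (1 - p - p) ^ (n - j)) = (1 - p) ^ n - p ^ n"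
    using binomial_ring[of p "1 - p - p" n] by (simp add: lessThan_Suc_atMost[symmetric] mult.commute)
  moreover have "(1 - p) ^ n < 1"
    using assms by (simp add: power_less_one_iff)
  ultimately show ?thesis
    unfolding pI_def sum_divide_distrib[symmetric]
    by (simp add: right_diff_distrib sum_subtractf mult.assoc)
qed

lemma pX_nonneg:
  assumes "0 < p" "p \<le> 1 - p"
  shows "0 \<le> pX p k n"
  by (induction k arbitrary: n) (auto intro!: sum_nonneg mult_nonneg_nonneg pI_nonneg[OF assms])

lemma pX_le_1:
  assumes "0 < p" "p \<le> 1 - p"
  shows "pX p k n \<le> 1"
proof (induction k arbitrary: n)
  case (Suc k)
  have "(\<Sum>j<n. pI p n j * pX p k j) \<le> (\<Sum>j<n. pI p n j)"
    using Suc pI_nonneg[OF assms] by (intro sum_mono mult_left_le) auto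
  then show ?case
    using sum_pI_eq_1[OF assms, of n] by auto
qed simp

lemma abs_pX_le_1:
  assumes "0 < p" "p \<le> 1 - p"
  shows "\<bar>pX p k n\<bar> \<le> 1"
  using pX_nonneg[OF assms] pX_le_1[OF assms] by (simp add: abs_le_iff)

definition egf :: "(nat \<Rightarrow> real) \<Rightarrow> complex \<Rightarrow> complex" where
  "egf a z = (\<Sum>n. complex_of_real (a n) * z ^ n / of_nat (fact n))"

lemma summable_exp_real: "summable (\<lambda>n. r ^ n / fact n :: real)"
  using summable_exp[of r] by (simp add: divide_inverse mult.commute)

lemma norm_egf_term_le:
  assumes "\<And>n. \<bar>a n\<bar> \<le> M"
  shows "norm (complex_of_real (a m) * z ^ m / of_nat (fact m)) \<le> M * (norm z ^ m / fact m)"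
  using mult_right_mono[OF assms[of m], of "norm z ^ m / fact m"]
  by (simp add: norm_mult norm_divide norm_power)

lemma summable_norm_egf:
  assumes "\<And>n. \<bar>a n\<bar> \<le> M"
  shows "summable (\<lambda>n. norm (complex_of_real (a n) * z ^ n / of_nat (fact n)))"
proof (rule summable_comparison_test)
  show "\<exists>N. \<forall>n\<ge>N. norm (norm (complex_of_real (a n) * z ^ n / of_nat (fact n))) \<le> M * (norm z ^ n / fact n)"
    using norm_egf_term_le[of a M, OF assms] by simp
qed (intro summable_mult summable_exp_real)

lemma egf_sums:
  assumes "\<And>n. \<bar>a n\<bar> \<le> M"
  shows "(\<lambda>n. complex_of_real (a n) * z ^ n / of_nat (fact n)) sums egf a z"
  unfolding egf_def by (rule summable_sums[OF summable_norm_cancel[OF summable_norm_egf[OF assms]]])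

lemma norm_egf_le:
  assumes "\<And>n. \<bar>a n\<bar> \<le> M"
  shows "norm (egf a z) \<le> M * exp (norm z)"
proof -
  have "norm (egf a z) \<le> (\<Sum>n. norm (complex_of_real (a n) * z ^ n / of_nat (fact n)))"
    unfolding egf_def by (rule summable_norm[OF summable_norm_egf[OF assms]])
  also have "\<dots> \<le> (\<Sum>n. M * (norm z ^ n / fact n))"
    by (intro suminf_le summable_norm_egf[OF assms] summable_mult summable_exp_real norm_egf_term_le[of a M, OF assms])
  also have "\<dots> = M * exp (norm z)"
    using exp_converges[of "norm z"] by (simp add: suminf_mult sums_iff divide_inverse mult.commute)
  finally show ?thesis .
qed

lemma egf_scale: "egf a (complex_of_real c * z) = egf (\<lambda>n. a n * c ^ n) z"
  unfolding egf_def by (simp add: power_mult_distrib mult.assoc)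

lemma egf_mult_exp_sums:
  assumes "\<And>n. \<bar>a n\<bar> \<le> M"
  shows "(\<lambda>n. complex_of_real (\<Sum>j\<le>n. real (n choose j) * a j * p ^ j * c ^ (n - j)) * z ^ n / of_nat (fact n))
           sums (egf a (complex_of_real p * z) * exp (complex_of_real c * z))"
proof -
  let ?A = "\<lambda>n. complex_of_real (a n) * (complex_of_real p * z) ^ n / of_nat (fact n)"
  let ?E = "\<lambda>n. (complex_of_real c * z) ^ n / of_nat (fact n)"
  have "summable (\<lambda>n. norm (?E n))"
    using summable_norm_egf[of "\<lambda>_. 1" 1 "complex_of_real c * z"] by simp
  from Cauchy_product_sums[OF summable_norm_egf[OF assms] this]
  have "(\<lambda>n. \<Sum>j\<le>n. ?A j * ?E (n - j)) sums (egf a (complex_of_real p * z) * (\<Sum>n. ?E n))"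
    unfolding egf_def .
  moreover have "(\<Sum>n. ?E n) = exp (complex_of_real c * z)"
    using exp_converges[of "complex_of_real c * z"] by (simp add: sums_iff scaleR_conv_of_real divide_inverse mult.commute)
  moreover have "?A j * ?E (n - j) = complex_of_real (real (n choose j) * a j * p ^ j * c ^ (n - j)) * z ^ n / of_nat (fact n)"
    if "j \<le> n" for j n
  proof -
    have zn: "z ^ n = z ^ j * z ^ (n - j)"
      using that by (simp add: power_add[symmetric])
    have binom: "complex_of_real (real (n choose j)) = fact n / (fact j * fact (n - j))"
      using binomial_fact[OF that, where 'a = complex] by simp
    show ?thesis
      unfolding of_real_mult binom zn of_real_power power_mult_distrib by (simp add: field_simps)
  qed
  ultimately show ?thesis
    by (simp add: sum_distrib_right sum_divide_distrib)
qed

lemma pX_Suc_binomial_convolution: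
  assumes "0 < p" "p \<le> 1 - p"
  shows "pX p (Suc k) n - pX p (Suc k) n * (1 - p) ^ n =
    (\<Sum>j\<le>n. real (n choose j) * pX p k j * p ^ j * (1 - p) ^ (n - j)) -
    (\<Sum>j\<le>n. real (n choose j) * pX p k j * p ^ j * (1 - p - p) ^ (n - j))"
proof (cases n)
  case (Suc m)
  let ?d = "\<lambda>j. real (n choose j) * pX p k j * p ^ j * (1 - p) ^ (n - j) -
                 real (n choose j) * pX p k j * p ^ j * (1 - p - p) ^ (n - j)"
  have "(1 - p) ^ Suc m < 1"
    using assms by (intro power_Suc_less_one) auto
  then have denom: "1 - (1 - p) ^ n \<noteq> 0"
    using Suc by simp
  have "(\<Sum>j\<le>n. real (n choose j) * pX p k j * p ^ j * (1 - p) ^ (n - j)) -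
        (\<Sum>j\<le>n. real (n choose j) * pX p k j * p ^ j * (1 - p - p) ^ (n - j)) = (\<Sum>j\<le>n. ?d j)"
    by (simp only: sum_subtractf)
  also have "\<dots> = (\<Sum>j<n. ?d j)"
    by (simp add: lessThan_Suc_atMost[symmetric])
  also have "\<dots> = (\<Sum>j<n. pI p n j * pX p k j) * (1 - (1 - p) ^ n)"
    unfolding sum_distrib_right pI_def using denom by (intro sum.cong) (auto simp: field_simps)
  also have "\<dots> = pX p (Suc k) n - pX p (Suc k) n * (1 - p) ^ n"
    using Suc by (simp add: right_diff_distrib)
  finally show ?thesis ..
qed simp

lemma egf_pX_Suc:
  assumes "0 < p" "p \<le> 1 - p"
  shows "egf (pX p (Suc k)) z = egf (pX p (Suc k)) (complex_of_real (1 - p) * z) +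
    egf (pX p k) (complex_of_real p * z) * (exp (complex_of_real (1 - p) * z) - exp (complex_of_real (1 - p - p) * z))"
proof -
  let ?term = "\<lambda>x n. complex_of_real x * z ^ n / of_nat (fact n)"
  let ?conv = "\<lambda>c n. \<Sum>j\<le>n. real (n choose j) * pX p k j * p ^ j * c ^ (n - j)"
  have split: "?term (x - y) n = ?term x n - ?term y n" for x y n
    by (simp only: of_real_diff left_diff_distrib diff_divide_distrib)
  have bound: "\<bar>pX p (Suc k) n * (1 - p) ^ n\<bar> \<le> 1" for n
  proof -
    have "(1 - p) ^ n \<le> 1"
      using assms by (intro power_le_one) auto
    then show ?thesis
      unfolding abs_mult using abs_pX_le_1[OF assms, of "Suc k" n] assms by (intro mult_le_one) auto
  qed
  have "(\<lambda>n. ?term (pX p (Suc k) n - pX p (Suc k) n * (1 - p) ^ n) n)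
          sums (egf (pX p (Suc k)) z - egf (pX p (Suc k)) (complex_of_real (1 - p) * z))"
    unfolding split egf_scale by (rule sums_diff[OF egf_sums[OF abs_pX_le_1[OF assms]] egf_sums[OF bound]])
  moreover have "(\<lambda>n. ?term (?conv (1 - p) n - ?conv (1 - p - p) n) n)
          sums (egf (pX p k) (complex_of_real p * z) * exp (complex_of_real (1 - p) * z) -
                egf (pX p k) (complex_of_real p * z) * exp (complex_of_real (1 - p - p) * z))"
    unfolding split
    by (rule sums_diff[OF egf_mult_exp_sums[OF abs_pX_le_1[OF assms]] egf_mult_exp_sums[OF abs_pX_le_1[OF assms]]])
  ultimately have "egf (pX p (Suc k)) z - egf (pX p (Suc k)) (complex_of_real (1 - p) * z) =
      egf (pX p k) (complex_of_real p * z) * exp (complex_of_real (1 - p) * z) -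
      egf (pX p k) (complex_of_real p * z) * exp (complex_of_real (1 - p - p) * z)"
    unfolding pX_Suc_binomial_convolution[OF assms] by (rule sums_unique2)
  then show ?thesis
    by (simp only: right_diff_distrib diff_eq_eq add.commute)
qed

lemma norm_egf_pX_le:
  assumes "0 < p" "p \<le> 1 - p"
  shows "norm (egf (pX p k) z) \<le> exp (norm z)"
proof -
  have "\<bar>pX p k n\<bar> \<le> 1" for n
    by (rule abs_pX_le_1[OF assms])
  from norm_egf_le[OF this] show ?thesis
    by simp
qed

lemma egf_pX_0: "egf (pX p 0) z = 1"
proof -
  have "(\<lambda>n. complex_of_real (pX p 0 n) * z ^ n / of_nat (fact n)) = (\<lambda>n. if n = 0 then 1 else 0)"
    by auto
  then show ?thesis
    unfolding egf_def using sums_single[of 0 "\<lambda>_. 1 :: complex"] by (simp add: sums_iff)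
qed

lemma At_eq_egf: "At p k z = exp (- z) * egf (pX p k) z"
  unfolding At_def egf_def ..

lemma At_Suc:
  assumes "0 < p" "p \<le> 1 - p"
  shows "At p (Suc k) z = (1 - exp (- (complex_of_real p * z))) * At p k (complex_of_real p * z) +
    exp (- (complex_of_real p * z)) * At p (Suc k) (complex_of_real (1 - p) * z)"
proof -
  let ?pz = "complex_of_real p * z" and ?qz = "complex_of_real (1 - p) * z"
  let ?F = "egf (pX p k) ?pz" and ?G = "egf (pX p (Suc k)) ?qz"
  have ring: "e * (G + F * (a - b)) = (e * a) * F - (e * b) * F + e * G" for e G F a b :: complex
    by (simp add: algebra_simps)
  have "At p (Suc k) z = (exp (- z) * exp ?qz) * ?F -
      (exp (- z) * exp (complex_of_real (1 - p - p) * z)) * ?F + exp (- z) * ?G"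
    unfolding At_eq_egf egf_pX_Suc[OF assms, of k z] by (rule ring)
  also have "exp (- z) = exp (- ?pz) * exp (- ?qz)"
    by (simp add: exp_add[symmetric] algebra_simps)
  also have "exp (- ?pz) * exp (- ?qz) * exp ?qz = exp (- ?pz)"
    by (simp add: exp_add[symmetric])
  also have "exp (- ?pz) * exp (- ?qz) * exp (complex_of_real (1 - p - p) * z) = exp (- ?pz) * exp (- ?pz)"
    by (simp add: exp_add[symmetric] algebra_simps)
  finally show ?thesis
    unfolding At_eq_egf[of p k ?pz] At_eq_egf[of p "Suc k" ?qz] left_diff_distrib mult_1_left
    by (simp only: mult.assoc)
qed

lemma bound_by_scaling_induction:
  fixes g :: "nat \<Rightarrow> complex \<Rightarrow> real" and h a b :: "complex \<Rightarrow> real"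
  assumes p: "0 < p" "p \<le> 1 - p" and R: "1 \<le> p * R"
    and scale: "\<And>z. z \<in> S \<Longrightarrow> complex_of_real p * z \<in> S \<and> complex_of_real (1 - p) * z \<in> S"
    and base: "\<And>z. z \<in> S \<Longrightarrow> 1 \<le> norm z \<Longrightarrow> g 0 z \<le> B * h z"
    and small: "\<And>k z. z \<in> S \<Longrightarrow> 1 \<le> norm z \<Longrightarrow> norm z \<le> R \<Longrightarrow> g k z \<le> B * h z"
    and step: "\<And>k z. z \<in> S \<Longrightarrow> R \<le> norm z \<Longrightarrow>
      g (Suc k) z \<le> a z * g k (complex_of_real p * z) + b z * g (Suc k) (complex_of_real (1 - p) * z)"
    and contract: "\<And>z. z \<in> S \<Longrightarrow> R \<le> norm z \<Longrightarrow>
      a z * h (complex_of_real p * z) + b z * h (complex_of_real (1 - p) * z) \<le> h z"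
    and nonneg: "\<And>z. 0 \<le> a z" "\<And>z. 0 \<le> b z" "0 \<le> B"
    and z: "z \<in> S" "1 \<le> norm z"
  shows "g k z \<le> B * h z"
  using z
proof (induction "k + nat \<lfloor>norm z\<rfloor>" arbitrary: k z rule: less_induct)
  case less
  show ?case
  proof (cases "norm z \<le> R")
    case False
    show ?thesis
    proof (cases k)
      case 0
      then show ?thesis using base less.prems by blast
    next
      case (Suc k')
      let ?pz = "complex_of_real p * z" and ?qz = "complex_of_real (1 - p) * z"
      have zR: "R \<le> norm z" using False by simp
      have pz: "norm ?pz = p * norm z" and qz: "norm ?qz = (1 - p) * norm z"
        using p by (simp_all add: norm_mult del: of_real_diff)
      have pz1: "1 \<le> p * norm z"
        using R zR p by (meson mult_left_mono order_trans less_imp_le)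
      moreover have "p * norm z \<le> (1 - p) * norm z"
        using p by (intro mult_right_mono) auto
      moreover have "\<lfloor>p * norm z\<rfloor> \<le> \<lfloor>norm z\<rfloor>"
        using p less.prems by (intro floor_mono) (simp add: mult_left_le_one_le)
      moreover have "\<lfloor>(1 - p) * norm z\<rfloor> \<le> \<lfloor>norm z - 1\<rfloor>"
        using pz1 by (intro floor_mono) (simp add: algebra_simps)
      ultimately have "k' + nat \<lfloor>norm ?pz\<rfloor> < k + nat \<lfloor>norm z\<rfloor>"
        and "Suc k' + nat \<lfloor>norm ?qz\<rfloor> < k + nat \<lfloor>norm z\<rfloor>"
        and "1 \<le> norm ?pz" "1 \<le> norm ?qz"
        using Suc pz qz less.prems by auto
      then have "g k' ?pz \<le> B * h ?pz" and "g (Suc k') ?qz \<le> B * h ?qz"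
        using less.hyps scale less.prems by blast+
      moreover have "g k z \<le> a z * g k' ?pz + b z * g (Suc k') ?qz"
        using step[OF \<open>z \<in> S\<close> zR, of k'] Suc by simp
      ultimately have "g k z \<le> a z * (B * h ?pz) + b z * (B * h ?qz)"
        using nonneg by (meson add_mono mult_left_mono order_trans)
      also have "\<dots> = B * (a z * h ?pz + b z * h ?qz)"
        by (simp add: algebra_simps)
      also have "\<dots> \<le> B * h z"
        using contract[OF \<open>z \<in> S\<close> zR] nonneg by (intro mult_left_mono) auto
      finally show ?thesis .
    qed
  qed (use small less.prems in blast)
qed

lemma powr_contraction:
  fixes p e d r :: real
  assumes "0 < p" "p \<le> 1 - p" "0 < e" "0 \<le> d" "d \<le> (1 - p powr e) / 2" "0 \<le> r"
  shows "(1 + d) * (p * r) powr e + d * ((1 - p) * r) powr e \<le> r powr e"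
proof -
  have pe: "p powr e < 1"
    using assms powr_less_mono2[of e p 1] by simp
  have "((1 - p) * r) powr e \<le> r powr e"
    using assms by (intro powr_mono2) (auto simp: mult_left_le_one_le)
  then have "(1 + d) * (p * r) powr e + d * ((1 - p) * r) powr e \<le> (p powr e + d * p powr e + d) * r powr e"
    using assms by (simp add: powr_mult algebra_simps mult_left_mono)
  also have "\<dots> \<le> r powr e"
    using assms pe mult_left_mono[of "p powr e" 1 d] by (intro mult_left_le_one_le) auto
  finally show ?thesis .
qed

lemma exp_contraction:
  fixes p e x r :: real
  assumes "0 < p" "p \<le> 1 - p" "0 < e" "e \<le> 1 / 2" "x \<le> (1 - 2 * e) * r" "0 \<le> r"
    and "ln 3 \<le> p * e * r"
  shows "(exp ((1 - p) * x) + exp ((1 - p - p) * x)) * exp ((1 - e) * (p * r)) + exp ((1 - e) * ((1 - p) * r))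
    \<le> exp ((1 - e) * r)"
proof -
  \<comment> \<open>Each of the three exponentials is at most E e^(-per), and e^(-per) <= 1/3.\<close>
  define E where "E = exp ((1 - e) * r)"
  have third: "exp (- (p * e * r)) \<le> 1 / 3"
    using assms(7) exp_le_cancel_iff[of "- (p * e * r)" "- ln 3"] by (simp add: exp_minus)
  have "(1 - p) * x \<le> (1 - p) * (1 - 2 * e) * r"
    using assms by (simp add: mult.assoc mult_left_mono)
  moreover have "(1 - p - p) * x \<le> (1 - p) * (1 - 2 * e) * r"
  proof -
    have "0 \<le> (1 - 2 * e) * r"
      using assms by simp
    have "(1 - p - p) * x \<le> (1 - p - p) * ((1 - 2 * e) * r)"
      using assms by (intro mult_left_mono) auto
    also have "\<dots> \<le> (1 - p) * ((1 - 2 * e) * r)"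
      using \<open>0 \<le> (1 - 2 * e) * r\<close> assms by (intro mult_right_mono) auto
    finally show ?thesis
      by (simp add: mult.assoc)
  qed
  ultimately have "exp ((1 - p) * x) + exp ((1 - p - p) * x) \<le> 2 * exp ((1 - p) * (1 - 2 * e) * r)"
    unfolding mult_2 by (intro add_mono exp_mono)
  then have "(exp ((1 - p) * x) + exp ((1 - p - p) * x)) * exp ((1 - e) * (p * r))
      \<le> 2 * (exp ((1 - p) * (1 - 2 * e) * r) * exp ((1 - e) * (p * r)))"
    by (simp add: mult_right_mono)
  also have "exp ((1 - p) * (1 - 2 * e) * r) * exp ((1 - e) * (p * r)) = E * exp (- ((1 - p) * e * r))"
    unfolding E_def exp_add[symmetric] by (simp add: algebra_simps)
  also have "\<dots> \<le> E * exp (- (p * e * r))"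
    using assms by (simp add: E_def mult_right_mono mult.assoc)
  finally have first: "(exp ((1 - p) * x) + exp ((1 - p - p) * x)) * exp ((1 - e) * (p * r))
      \<le> 2 * (E * exp (- (p * e * r)))"
    by simp
  have "exp ((1 - e) * ((1 - p) * r)) = E * exp (- ((1 - e) * p * r))"
    unfolding E_def exp_add[symmetric] by (simp add: algebra_simps)
  also have "\<dots> \<le> E * exp (- (p * e * r))"
    using assms by (simp add: E_def mult_right_mono mult.assoc mult.left_commute)
  finally have "(exp ((1 - p) * x) + exp ((1 - p - p) * x)) * exp ((1 - e) * (p * r)) + exp ((1 - e) * ((1 - p) * r))
      \<le> 3 * E * exp (- (p * e * r))"
    using first by simp
  also have "\<dots> \<le> E"
    using third by (simp add: E_def)
  finally show ?thesis
    unfolding E_def .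
qed

lemma norm_At_le_powr:
  assumes p: "0 < p" "p \<le> 1 - p" and "0 < c" "0 < e"
  shows "\<exists>B. \<forall>k z. c * norm z \<le> Re z \<longrightarrow> 1 \<le> norm z \<longrightarrow> norm (At p k z) \<le> B * norm z powr e"
proof -
  define d where "d = (1 - p powr e) / 2"
  \<comment> \<open>Beyond R, p|z| >= 1 and, on the sector, e^(-p Re z) <= d.\<close>
  define R where "R = max (1 / p) (- ln d / (p * c))"
  have "p powr e < 1"
    using assms powr_less_mono2[of e p 1] by simp
  then have d: "0 < d"
    by (simp add: d_def)
  have "p * (1 / p) \<le> p * R"
    using p by (intro mult_left_mono) (auto simp: R_def)
  then have R: "1 \<le> p * R"
    using p by simp
  have expR: "1 \<le> exp R"
    using p by (simp add: R_def le_max_iff_disj)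
  let ?S = "{z. c * norm z \<le> Re z}"
  have Re_nonneg: "0 \<le> Re z" if "z \<in> ?S" for z
    using that \<open>0 < c\<close> order_trans[of 0 "c * norm z" "Re z"] by simp
  have powr_ge_1: "1 \<le> norm z powr e" if "1 \<le> norm z" for z :: complex
    using that \<open>0 < e\<close> ge_one_powr_ge_zero by simp
  have "norm (At p k z) \<le> exp R * norm z powr e" if "z \<in> ?S" "1 \<le> norm z" for k z
  proof (rule bound_by_scaling_induction[where g = "\<lambda>k z. norm (At p k z)" and h = "\<lambda>z. norm z powr e"
        and a = "\<lambda>z. 1 + exp (- (p * Re z))" and b = "\<lambda>z. exp (- (p * Re z))", OF p R _ _ _ _ _ _ _ _ that])
    fix z assume "z \<in> ?S"
    then show "complex_of_real p * z \<in> ?S \<and> complex_of_real (1 - p) * z \<in> ?S"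
      using p by (simp add: norm_mult mult.left_commute mult_left_mono del: of_real_diff)
  next
    fix z assume "z \<in> ?S" "1 \<le> norm z"
    then have "norm (At p 0 z) \<le> 1"
      using Re_nonneg by (simp add: At_eq_egf egf_pX_0)
    also have "\<dots> \<le> exp R * norm z powr e"
      using mult_mono[OF expR powr_ge_1[OF \<open>1 \<le> norm z\<close>]] by simp
    finally show "norm (At p 0 z) \<le> exp R * norm z powr e" .
  next
    fix k z assume z: "z \<in> ?S" "1 \<le> norm z" "norm z \<le> R"
    have exp_le_1: "norm (exp (- z)) \<le> 1"
      using Re_nonneg[OF z(1)] by simp
    have "norm (At p k z) = norm (exp (- z)) * norm (egf (pX p k) z)"
      unfolding At_eq_egf norm_mult ..
    also have "\<dots> \<le> 1 * exp (norm z)"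
      by (rule mult_mono[OF exp_le_1 norm_egf_pX_le[OF p, of k z]]) simp_all
    also have "\<dots> \<le> exp R * norm z powr e"
      using mult_mono[OF exp_mono[OF z(3)] powr_ge_1[OF z(2)]] by simp
    finally show "norm (At p k z) \<le> exp R * norm z powr e" .
  next
    fix k z
    let ?pz = "complex_of_real p * z" and ?qz = "complex_of_real (1 - p) * z"
    have "norm (At p (Suc k) z) \<le> norm (1 - exp (- ?pz)) * norm (At p k ?pz) + norm (exp (- ?pz)) * norm (At p (Suc k) ?qz)"
      unfolding At_Suc[OF p, of k z] norm_mult[symmetric] by (rule norm_triangle_ineq)
    also have "\<dots> \<le> (1 + exp (- (p * Re z))) * norm (At p k ?pz) + exp (- (p * Re z)) * norm (At p (Suc k) ?qz)"
      using norm_triangle_ineq4[of 1 "exp (- ?pz)"] by (intro add_mono mult_right_mono) auto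
    finally show "norm (At p (Suc k) z) \<le> (1 + exp (- (p * Re z))) * norm (At p k ?pz) + exp (- (p * Re z)) * norm (At p (Suc k) ?qz)" .
  next
    fix z assume z: "z \<in> ?S" "R \<le> norm z"
    have "- ln d \<le> p * c * norm z"
      using z p \<open>0 < c\<close> by (simp add: R_def field_simps)
    also have "\<dots> \<le> p * Re z"
      using z p by (simp add: mult.assoc mult_left_mono)
    finally have "exp (- (p * Re z)) \<le> exp (ln d)"
      by simp
    then have "exp (- (p * Re z)) \<le> d"
      using d by simp
    then show "(1 + exp (- (p * Re z))) * norm (complex_of_real p * z) powr e +
        exp (- (p * Re z)) * norm (complex_of_real (1 - p) * z) powr e \<le> norm z powr e"
      using powr_contraction[OF p \<open>0 < e\<close>, of "exp (- (p * Re z))" "norm z"] p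
      by (simp add: norm_mult d_def del: of_real_diff)
  qed auto
  then show ?thesis
    by blast
qed

lemma norm_egf_pX_le_exp:
  assumes p: "0 < p" "p \<le> 1 - p" and e: "0 < e" "e \<le> 1 / 2"
  shows "\<exists>B. \<forall>k z. Re z \<le> (1 - 2 * e) * norm z \<longrightarrow> 1 \<le> norm z \<longrightarrow>
    norm (egf (pX p k) z) \<le> B * exp ((1 - e) * norm z)"
proof -
  define R where "R = max (1 / p) (ln 3 / (p * e))"
  have "p * (1 / p) \<le> p * R"
    using p by (intro mult_left_mono) (auto simp: R_def)
  then have R: "1 \<le> p * R"
    using p by simp
  have expR: "1 \<le> exp R"
    using p by (simp add: R_def le_max_iff_disj)
  have exp_ge_1: "1 \<le> exp ((1 - e) * norm z)" for z :: complex
    using e by simp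
  let ?S = "{z. Re z \<le> (1 - 2 * e) * norm z}"
  have "norm (egf (pX p k) z) \<le> exp R * exp ((1 - e) * norm z)" if "z \<in> ?S" "1 \<le> norm z" for k z
  proof (rule bound_by_scaling_induction[where g = "\<lambda>k z. norm (egf (pX p k) z)" and h = "\<lambda>z. exp ((1 - e) * norm z)"
        and a = "\<lambda>z. exp ((1 - p) * Re z) + exp ((1 - p - p) * Re z)" and b = "\<lambda>z. 1", OF p R _ _ _ _ _ _ _ _ that])
    fix z assume "z \<in> ?S"
    then show "complex_of_real p * z \<in> ?S \<and> complex_of_real (1 - p) * z \<in> ?S"
      using p by (simp add: norm_mult mult.left_commute mult_left_mono del: of_real_diff)
  next
    fix z assume "z \<in> ?S" "1 \<le> norm z"
    have "1 \<le> exp R * exp ((1 - e) * norm z)"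
      using mult_mono[OF expR exp_ge_1[of z]] by simp
    then show "norm (egf (pX p 0) z) \<le> exp R * exp ((1 - e) * norm z)"
      by (simp add: egf_pX_0)
  next
    fix k z assume z: "z \<in> ?S" "1 \<le> norm z" "norm z \<le> R"
    have "norm (egf (pX p k) z) \<le> exp R * 1"
      using order_trans[OF norm_egf_pX_le[OF p, of k z] exp_mono[OF z(3)]] by simp
    also have "\<dots> \<le> exp R * exp ((1 - e) * norm z)"
      using exp_ge_1[of z] by (intro mult_left_mono) auto
    finally show "norm (egf (pX p k) z) \<le> exp R * exp ((1 - e) * norm z)" .
  next
    fix k z
    let ?pz = "complex_of_real p * z" and ?qz = "complex_of_real (1 - p) * z"
    let ?F = "norm (egf (pX p k) ?pz)"
    let ?N = "norm (exp ?qz - exp (complex_of_real (1 - p - p) * z))"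
    have "norm (egf (pX p (Suc k)) z) \<le> norm (egf (pX p (Suc k)) ?qz) + ?F * ?N"
      unfolding egf_pX_Suc[OF p, of k z] norm_mult[symmetric] by (rule norm_triangle_ineq)
    moreover have "?N \<le> exp ((1 - p) * Re z) + exp ((1 - p - p) * Re z)"
      using norm_triangle_ineq4[of "exp ?qz" "exp (complex_of_real (1 - p - p) * z)"]
      by (simp del: of_real_diff)
    then have "?F * ?N \<le> ?F * (exp ((1 - p) * Re z) + exp ((1 - p - p) * Re z))"
      by (rule mult_left_mono) simp
    ultimately have "norm (egf (pX p (Suc k)) z) \<le> norm (egf (pX p (Suc k)) ?qz) +
        ?F * (exp ((1 - p) * Re z) + exp ((1 - p - p) * Re z))"
      by (rule order_trans[OF _ add_left_mono])
    then show "norm (egf (pX p (Suc k)) z) \<le> (exp ((1 - p) * Re z) + exp ((1 - p - p) * Re z)) *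
        ?F + 1 * norm (egf (pX p (Suc k)) ?qz)"
      by (simp only: mult_1_left mult.commute add.commute)
  next
    fix z assume z: "z \<in> ?S" "R \<le> norm z"
    have "ln 3 \<le> p * e * norm z"
      using z p e by (simp add: R_def field_simps)
    with exp_contraction[OF p e, of "Re z" "norm z"] z p
    show "(exp ((1 - p) * Re z) + exp ((1 - p - p) * Re z)) * exp ((1 - e) * norm (complex_of_real p * z)) +
        1 * exp ((1 - e) * norm (complex_of_real (1 - p) * z)) \<le> exp ((1 - e) * norm z)"
      by (simp add: norm_mult del: of_real_diff)
  qed auto
  then show ?thesis
    by blast
qed

lemma Re_eq_norm_mult_cos_Arg: "Re z = norm z * cos (Arg z)"
  by (cases "z = 0") (simp_all add: cos_Arg)

lemma cos_mult_norm_le_Re: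
  assumes "\<bar>Arg z\<bar> \<le> t" "t \<le> pi"
  shows "cos t * norm z \<le> Re z"
proof -
  have "cos t \<le> cos \<bar>Arg z\<bar>"
    using assms by (intro cos_monotone_0_pi_le) auto
  then show ?thesis
    using Re_eq_norm_mult_cos_Arg[of z] by (simp add: mult.commute mult_left_mono)
qed

lemma Re_le_cos_mult_norm:
  assumes "0 \<le> t" "t \<le> \<bar>Arg z\<bar>"
  shows "Re z \<le> cos t * norm z"
proof -
  have "cos \<bar>Arg z\<bar> \<le> cos t"
    using assms Arg_bounded[of z] by (intro cos_monotone_0_pi_le) auto
  then show ?thesis
    using Re_eq_norm_mult_cos_Arg[of z] by (simp add: mult.commute mult_left_mono)
qed

theorem mainTheorem7:
  fixes p \<epsilon> :: real
  assumes "0 < p" and "p \<le> 1 - p" and "0 < \<epsilon>" and "\<epsilon> < pi / 2"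
  shows "\<exists>\<epsilon>'. 0 < \<epsilon>' \<and> \<epsilon>' < 1 \<and>
    (\<exists>C1. \<forall>k z. 1 \<le> norm z \<and> \<bar>Arg z\<bar> \<le> \<epsilon> \<longrightarrow>
        norm (At p k z) \<le> C1 * norm z powr \<epsilon>') \<and>
    (\<exists>C2. \<forall>k z. 1 \<le> norm z \<and> \<epsilon> \<le> \<bar>Arg z\<bar> \<and> \<bar>Arg z\<bar> \<le> pi \<longrightarrow>
        norm (exp z * At p k z) \<le> C2 * exp ((1 - \<epsilon>') * norm z))"
proof -
  define e where "e = (1 - cos \<epsilon>) / 2"
  have "0 < cos \<epsilon>" "cos \<epsilon> < 1"
    using assms cos_monotone_0_pi[of 0 \<epsilon>] by (auto intro: cos_gt_zero_pi)
  then have e: "0 < e" "e < 1" "e \<le> 1 / 2" and cos_eq: "cos \<epsilon> = 1 - 2 * e"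
    by (simp_all add: e_def field_simps)
  obtain C1 where C1: "\<forall>k z. cos \<epsilon> * norm z \<le> Re z \<longrightarrow> 1 \<le> norm z \<longrightarrow> norm (At p k z) \<le> C1 * norm z powr e"
    using norm_At_le_powr[OF assms(1,2) \<open>0 < cos \<epsilon>\<close> e(1)] by blast
  obtain C2 where C2: "\<forall>k z. Re z \<le> (1 - 2 * e) * norm z \<longrightarrow> 1 \<le> norm z \<longrightarrow>
      norm (egf (pX p k) z) \<le> C2 * exp ((1 - e) * norm z)"
    using norm_egf_pX_le_exp[OF assms(1,2) e(1,3)] by blast
  have "exp z * At p k z = egf (pX p k) z" for k z
    by (simp add: At_eq_egf exp_minus_inverse mult.assoc[symmetric])
  then show ?thesis
    using e C1 C2 cos_mult_norm_le_Re[of _ \<epsilon>] Re_le_cos_mult_norm[of \<epsilon>] assms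
    by (intro exI[of _ e] conjI exI[of _ C1] exI[of _ C2]) (auto simp: cos_eq)
qed

end
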